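(* Let $X$ be a connected, simply connected, locally path-connected metric space. Let $\Omega=(\Omega_1,\ldots,\Omega_q)$ be a collection of pairwise disjoint non-empty open sets such that $\bigcup_{i=1}^q\overline{\Omega_i}=X$, and assume that for every $i\in[q]=\{1,\ldots,q\}$, $\Omega_i$ is connected and $\Omega_i=\operatorname{int}\overline{\Omega_i}$. For $K\subset[q]$ write $\bar\Omega_K:=\bigcup_{i\in K}\overline{\Omega_i}$. If $\Sigma=\bigcup_{i\in[q]}\partial\Omega_i$ is disconnected, then there exists a partition of $[q]$ into three pairwise disjoint non-empty sets $I$, $\{\ell\}$, $J$ such that $X$ is the disjoint union of $\bar\Omega_I$, $\Omega_\ell$ and $\bar\Omega_J$, and $\partial\Omega_\ell$ is the disjoint union of the two non-empty sets $\partial\bar\Omega_I$ and $\partial\bar\Omega_J$. *)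

theory Defs
  imports "HOL-Analysis.Analysis"
begin

definition closure_union :: "(nat \<Rightarrow> 'a::topological_space set) \<Rightarrow> nat set \<Rightarrow> 'a set" where
  "closure_union \<Omega> K = (\<Union>i\<in>K. closure (\<Omega> i))"

end

theory Submission
  imports Defs
begin

text \<open>
  Split the disconnected closed set \<open>\<Sigma>\<close> into disjoint nonempty closed pieces \<open>A\<close> and \<open>B\<close>.
  If every cell boundary lay in only one piece, the closures of the cells would fall into two
  disjoint closed families covering the connected space \<open>X\<close>; so some \<open>\<partial>\<Omega>\<^sub>l\<close> meets both
  pieces and is disconnected. A simply connected, locally path-connected space is unicoherent:
  a separation of \<open>S \<inter> T\<close> would produce a map \<open>X \<rightarrow> S\<^sup>1\<close> without a continuous logarithm.
  Applied to \<open>X = closure \<Omega>\<^sub>l \<union> (X - \<Omega>\<^sub>l)\<close>, whose intersection is \<open>\<partial>\<Omega>\<^sub>l\<close>, this shows that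
  \<open>X - \<Omega>\<^sub>l\<close> splits into two disjoint nonempty closed sets. By regularity \<open>X - \<Omega>\<^sub>l\<close> is the union
  of the closures of the other cells, each connected and hence inside one of the two sets,
  which therefore are \<open>\<Omega>\<^sub>I\<close> and \<open>\<Omega>\<^sub>J\<close>; their frontiers are the parts of \<open>\<partial>\<Omega>\<^sub>l\<close> they contain.
\<close>

text \<open>
  The library provides continuous logarithms only on subsets of normed spaces. The Kuratowski
  embedding, an isometry of a metric space into its bounded continuous real functions (the base
  point \<open>a\<close> only keeps them bounded), transports them to arbitrary metric spaces.
\<close>

definition kuratowski_embedding :: "'a::metric_space \<Rightarrow> 'a \<Rightarrow> ('a \<Rightarrow>\<^sub>C real)" where
  "kuratowski_embedding a x = Bcontfun (\<lambda>y. dist x y - dist a y)"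

lemma apply_kuratowski_embedding:
  "apply_bcontfun (kuratowski_embedding a x) = (\<lambda>y. dist x y - dist a y)"
proof -
  have "(\<lambda>y. dist x y - dist a y) \<in> bcontfun"
    by (intro bcontfun_normI[where b = "dist x a"] continuous_intros)
       (metis abs_dist_diff_le dist_commute real_norm_def)
  then show ?thesis
    by (simp add: kuratowski_embedding_def Bcontfun_inverse)
qed

lemma dist_kuratowski_embedding:
  "dist (kuratowski_embedding a x) (kuratowski_embedding a x') = dist x x'"
proof (rule antisym)
  show "dist (kuratowski_embedding a x) (kuratowski_embedding a x') \<le> dist x x'"
  proof (rule dist_bound)
    fix y
    have "\<bar>dist x y - dist x' y\<bar> \<le> dist x x'"
      using abs_dist_diff_le[of x y x'] abs_dist_diff_le[of x' y x] by (simp add: dist_commute abs_minus_commute)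
    then show "dist (kuratowski_embedding a x y) (kuratowski_embedding a x' y) \<le> dist x x'"
      by (simp add: apply_kuratowski_embedding dist_real_def)
  qed
  show "dist x x' \<le> dist (kuratowski_embedding a x) (kuratowski_embedding a x')"
    using dist_bounded[of "kuratowski_embedding a x" x' "kuratowski_embedding a x'"]
    by (simp add: apply_kuratowski_embedding dist_real_def)
qed

lemma isometry_imp_homeomorphism:
  fixes f :: "'a::metric_space \<Rightarrow> 'b::metric_space"
  assumes "\<And>x y. x \<in> S \<Longrightarrow> y \<in> S \<Longrightarrow> dist (f x) (f y) = dist x y"
  shows "homeomorphism S (f ` S) f (inv_into S f)"
proof -
  have "inj_on f S"
    by (metis assms dist_eq_0_iff inj_onI)
  have "1-lipschitz_on S f"
    by (intro lipschitz_onI) (simp_all add: assms)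
  moreover have "1-lipschitz_on (f ` S) (inv_into S f)"
    by (intro lipschitz_onI) (auto simp: assms inv_into_into inv_into_f_f[OF \<open>inj_on f S\<close>])
  ultimately show ?thesis
    by (intro homeomorphismI lipschitz_on_continuous_on)
       (auto simp: inv_into_into inv_into_f_f[OF \<open>inj_on f S\<close>])
qed

lemma continuous_logarithm_on_simply_connected_metric:
  fixes f :: "'a::metric_space \<Rightarrow> complex"
  assumes contf: "continuous_on S f" and S: "simply_connected S" "locally path_connected S"
      and f: "\<And>z. z \<in> S \<Longrightarrow> f z \<noteq> 0"
  obtains g where "continuous_on S g" "\<And>x. x \<in> S \<Longrightarrow> f x = exp (g x)"
proof -
  fix a :: 'a
  define e where "e = kuratowski_embedding a"
  define e' where "e' = inv_into S e"
  have hom: "homeomorphism S (e ` S) e e'"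
    unfolding e_def e'_def by (rule isometry_imp_homeomorphism) (rule dist_kuratowski_embedding)
  then have "S homeomorphic e ` S"
    unfolding homeomorphic_def by blast
  then have "simply_connected (e ` S)" "locally path_connected (e ` S)"
    using S homeomorphic_simply_connected_eq homeomorphic_locally homeomorphic_path_connectedness
    by blast+
  moreover have "continuous_on (e ` S) (f \<circ> e')"
    using hom contf by (metis continuous_on_compose homeomorphism_def)
  moreover have "(f \<circ> e') z \<noteq> 0" if "z \<in> e ` S" for z
    using hom f that by (metis comp_apply homeomorphism_image2 imageI)
  ultimately obtain h where conth: "continuous_on (e ` S) h"
      and h: "\<And>z. z \<in> e ` S \<Longrightarrow> (f \<circ> e') z = exp (h z)"
    using continuous_logarithm_on_simply_connected by blast
  show thesis
  proof
    show "continuous_on S (h \<circ> e)"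
      using hom conth by (metis continuous_on_compose homeomorphism_def)
    show "f x = exp ((h \<circ> e) x)" if "x \<in> S" for x
      using h[of "e x"] hom that by (simp add: homeomorphism_apply1)
  qed
qed

lemma Urysohn_metric_local:
  fixes U :: "'a::metric_space set"
  assumes "closedin (top_of_set U) V" "closedin (top_of_set U) W" "V \<inter> W = {}"
  obtains q :: "'a \<Rightarrow> real"
  where "continuous_on U q" "\<And>x. x \<in> V \<Longrightarrow> q x = 0" "\<And>x. x \<in> W \<Longrightarrow> q x = 1"
proof -
  have "normal_space (top_of_set U)"
    by (simp add: metrizable_imp_normal_space metrizable_space_subtopology metrizable_space_euclidean)
  moreover have "disjnt V W"
    using assms(3) by (simp add: disjnt_def)
  ultimately obtain q where "continuous_map (top_of_set U) euclideanreal q" "q ` V \<subseteq> {0}" "q ` W \<subseteq> {1}"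
    using Urysohn_lemma_alt assms(1,2) by metis
  then show thesis
    using that[of q] by (simp add: image_subset_iff)
qed

lemma continuous_exp_eq_imp_diff_constant_on:
  fixes f g :: "'a::topological_space \<Rightarrow> complex"
  assumes "connected S" "continuous_on S f" "continuous_on S g"
      and fg: "\<And>x. x \<in> S \<Longrightarrow> exp (f x) = exp (g x)"
  shows "(\<lambda>x. f x - g x) constant_on S"
proof (rule continuous_discrete_range_constant)
  show "continuous_on S (\<lambda>x. f x - g x)"
    by (intro continuous_intros assms)
  show "\<exists>e>0. \<forall>y. y \<in> S \<and> f y - g y \<noteq> f x - g x \<longrightarrow> e \<le> cmod (f y - g y - (f x - g x))"
    if "x \<in> S" for x
  proof (intro exI conjI allI impI)
    fix y assume y: "y \<in> S \<and> f y - g y \<noteq> f x - g x"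
    have "exp (f y - g y) = exp (f x - g x)"
      using fg y \<open>x \<in> S\<close> by (simp add: exp_diff)
    then obtain n :: int where n: "f y - g y - (f x - g x) = of_int (2 * n) * pi * \<i>"
      by (auto simp: exp_eq algebra_simps)
    with y have "n \<noteq> 0"
      by auto
    then have "2 * pi \<le> 2 * pi * \<bar>of_int n\<bar>"
      by simp
    also have "\<dots> = cmod (f y - g y - (f x - g x))"
      by (simp add: n norm_mult)
    finally show "2 * pi \<le> cmod (f y - g y - (f x - g x))" .
  qed simp
qed (use assms in auto)

lemma glued_exp_logarithm_imp_constant_on:
  fixes q :: "'a::topological_space \<Rightarrow> real"
  assumes "connected S" "connected T" "continuous_on (S \<union> T) h" "continuous_on (S \<union> T) q"
    and hS: "\<And>x. x \<in> S \<Longrightarrow> exp (h x) = exp (pi * \<i> * q x)"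
    and hT: "\<And>x. x \<in> T \<Longrightarrow> exp (h x) = exp (- (pi * \<i> * q x))"
  shows "q constant_on (S \<inter> T)"
proof -
  have "continuous_on S h" "continuous_on T h" "continuous_on S q" "continuous_on T q"
    using assms(3,4) by (auto intro: continuous_on_subset)
  then have "(\<lambda>x. h x - pi * \<i> * q x) constant_on S"
    and "(\<lambda>x. h x - - (pi * \<i> * q x)) constant_on T"
    using assms(1,2) hS hT
    by (intro continuous_exp_eq_imp_diff_constant_on continuous_intros; simp)+
  then obtain c d where c: "\<And>x. x \<in> S \<Longrightarrow> h x - pi * \<i> * q x = c"
    and d: "\<And>x. x \<in> T \<Longrightarrow> h x + pi * \<i> * q x = d"
    unfolding constant_on_def by auto
  have "q x = Im (d - c) / (2 * pi)" if "x \<in> S \<inter> T" for x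
    using c[of x] d[of x] that pi_gt_zero by (auto simp: complex_eq_iff field_simps)
  then show ?thesis
    unfolding constant_on_def by blast
qed

lemma simply_connected_imp_unicoherent:
  fixes U :: "'a::metric_space set"
  assumes U: "simply_connected U" "locally path_connected U"
  shows "unicoherent U"
proof
  fix S T
  assume "connected S" "connected T" and U_eq: "U = S \<union> T"
    and cloS: "closedin (top_of_set U) S" and cloT: "closedin (top_of_set U) T"
  show "connected (S \<inter> T)"
    unfolding connected_closedin_eq
  proof clarify
    fix V W
    assume "closedin (top_of_set (S \<inter> T)) V" "closedin (top_of_set (S \<inter> T)) W"
      and VW: "V \<union> W = S \<inter> T" "V \<inter> W = {}" and "V \<noteq> {}" "W \<noteq> {}"
    moreover have "closedin (top_of_set U) (S \<inter> T)"
      using cloS cloT by blast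
    ultimately have "closedin (top_of_set U) V" "closedin (top_of_set U) W"
      using closedin_trans by blast+
    then obtain q :: "'a \<Rightarrow> real" where contq: "continuous_on U q"
      and qV: "\<And>x. x \<in> V \<Longrightarrow> q x = 0" and qW: "\<And>x. x \<in> W \<Longrightarrow> q x = 1"
      using VW(2) by (rule Urysohn_metric_local) auto
    have agree: "exp (pi * \<i> * q x) = exp (- (pi * \<i> * q x))" if "x \<in> S \<inter> T" for x
    proof -
      have "x \<in> V \<or> x \<in> W"
        using that VW(1) by blast
      then show ?thesis
        using qV qW by (auto simp: exp_minus)
    qed
    define g where "g x = (if x \<in> S then exp (pi * \<i> * q x) else exp (- (pi * \<i> * q x)))" for x
    have "continuous_on S q" "continuous_on T q"
      using contq U_eq by (auto intro: continuous_on_subset)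
    then have "continuous_on U g"
      unfolding g_def U_eq
      using cloS cloT agree U_eq
      by (intro continuous_on_cases_local continuous_intros) auto
    then obtain h where conth: "continuous_on U h" and h: "\<And>x. x \<in> U \<Longrightarrow> g x = exp (h x)"
      using continuous_logarithm_on_simply_connected_metric[OF _ U] by (metis exp_not_eq_zero g_def)
    have "q constant_on (S \<inter> T)"
    proof (rule glued_exp_logarithm_imp_constant_on)
      show "exp (h x) = exp (pi * \<i> * q x)" if "x \<in> S" for x
        using h[of x] that U_eq by (simp add: g_def)
      show "exp (h x) = exp (- (pi * \<i> * q x))" if "x \<in> T" for x
        using h[of x] that U_eq agree[of x] unfolding g_def by (metis IntI UnCI)
    qed (use \<open>connected S\<close> \<open>connected T\<close> conth contq U_eq in auto)
    moreover obtain v w where "v \<in> V" "w \<in> W"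
      using \<open>V \<noteq> {}\<close> \<open>W \<noteq> {}\<close> by blast
    ultimately show False
      using VW(1) qV qW unfolding constant_on_def by (metis UnCI zero_neq_one)
  qed
qed

lemma frontier_nonempty_in_connected_space:
  fixes P :: "'a::topological_space set"
  assumes "connected (UNIV :: 'a set)" "P \<noteq> {}" "P \<noteq> UNIV"
  shows "frontier P \<noteq> {}"
proof
  assume "frontier P = {}"
  then have "closure P = P" "interior P = P"
    using closure_subset interior_subset by (fastforce simp: frontier_def)+
  then have "open P" "closed P"
    by (simp_all only: interior_eq closure_eq)
  then show False
    using connectedD[OF assms(1) \<open>open P\<close>, of "- P"] assms(2,3) by auto
qed

lemma frontier_of_closed_piece_of_Compl:
  fixes P R G :: "'a::topological_space set"
  assumes "closed P" "closed R" "P \<inter> R = {}" "P \<union> R = - G" "open G"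
  shows "frontier P = P \<inter> frontier G"
proof -
  have "interior P \<inter> closure G = {}"
    using assms(4,5) interior_subset[of P] open_Int_closure_eq_empty[of "interior P" G] by blast
  moreover have "P - closure G = - (R \<union> closure G)"
    using assms(3,4) closure_subset by blast
  then have "P - closure G \<subseteq> interior P"
    using assms(2) by (intro interior_maximal) auto
  ultimately have "interior P = P - closure G"
    using interior_subset by blast
  then show ?thesis
    using assms(1,4,5) by (auto simp: frontier_def interior_open)
qed

lemma connected_frontier_if_unicoherent:
  fixes G :: "'a::topological_space set"
  assumes "unicoherent (UNIV :: 'a set)" "open G" "connected G" "connected (- G)"
  shows "connected (frontier G)"
proof -
  have "frontier G = closure G \<inter> - G"
    using assms(2) by (auto simp: frontier_def interior_open)
  moreover have "closure G \<union> - G = UNIV"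
    using closure_subset by blast
  ultimately show ?thesis
    using assms unicoherentD[of UNIV "closure G" "- G"]
    by (simp add: connected_imp_connected_closure closed_Compl)
qed

locale regular_open_partition =
  fixes Q :: "nat set" and \<Omega> :: "nat \<Rightarrow> 'a::topological_space set"
  assumes finite_index: "finite Q"
    and open_cell: "\<And>i. i \<in> Q \<Longrightarrow> open (\<Omega> i)"
    and cell_nonempty: "\<And>i. i \<in> Q \<Longrightarrow> \<Omega> i \<noteq> {}"
    and cells_disjoint: "\<And>i j. i \<in> Q \<Longrightarrow> j \<in> Q \<Longrightarrow> i \<noteq> j \<Longrightarrow> \<Omega> i \<inter> \<Omega> j = {}"
    and closures_cover: "(\<Union>i\<in>Q. closure (\<Omega> i)) = UNIV"
    and connected_cell: "\<And>i. i \<in> Q \<Longrightarrow> connected (\<Omega> i)"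
    and regular_cell: "\<And>i. i \<in> Q \<Longrightarrow> \<Omega> i = interior (closure (\<Omega> i))"
begin

lemma cell_Int_closure_eq_empty:
  "i \<in> Q \<Longrightarrow> j \<in> Q \<Longrightarrow> i \<noteq> j \<Longrightarrow> \<Omega> i \<inter> closure (\<Omega> j) = {}"
  by (simp add: cells_disjoint open_cell open_Int_closure_eq_empty)

lemma frontier_cell: "i \<in> Q \<Longrightarrow> frontier (\<Omega> i) = closure (\<Omega> i) - \<Omega> i"
  by (simp add: frontier_def interior_open open_cell)

lemma closure_Int_closure_subset_frontier:
  assumes "i \<in> Q" "j \<in> Q" "i \<noteq> j"
  shows "closure (\<Omega> i) \<inter> closure (\<Omega> j) \<subseteq> frontier (\<Omega> i)"
  using cell_Int_closure_eq_empty[OF assms] frontier_cell[OF assms(1)] by blast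

lemma closure_union_nonempty:
  assumes "K \<subseteq> Q" "K \<noteq> {}"
  shows "closure_union \<Omega> K \<noteq> {}"
  using assms cell_nonempty closure_subset by (fastforce simp: closure_union_def)

lemma closed_closure_union: "K \<subseteq> Q \<Longrightarrow> closed (closure_union \<Omega> K)"
  using finite_index by (auto simp: closure_union_def intro!: closed_UN dest: finite_subset)

lemma Compl_cell_eq_closure_union:
  assumes "l \<in> Q"
  shows "- \<Omega> l = closure_union \<Omega> (Q - {l})"
proof
  show "closure_union \<Omega> (Q - {l}) \<subseteq> - \<Omega> l"
    using cell_Int_closure_eq_empty[OF assms] by (auto simp: closure_union_def)
  have "closed (closure_union \<Omega> (Q - {l}))"
    by (simp add: closed_closure_union)
  moreover have "- closure_union \<Omega> (Q - {l}) \<subseteq> closure (\<Omega> l)"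
    using closures_cover by (auto simp: closure_union_def)
  ultimately have "- closure_union \<Omega> (Q - {l}) \<subseteq> \<Omega> l"
    using regular_cell[OF assms] by (metis interior_maximal open_Compl)
  then show "- \<Omega> l \<subseteq> closure_union \<Omega> (Q - {l})"
    by blast
qed

lemma closure_cell_subset_piece:
  assumes "l \<in> Q" "i \<in> Q - {l}" "closed P" "closed R" "P \<inter> R = {}" "P \<union> R = - \<Omega> l"
  shows "closure (\<Omega> i) \<subseteq> P \<or> closure (\<Omega> i) \<subseteq> R"
proof -
  have "closure (\<Omega> i) \<subseteq> P \<union> R"
    using assms Compl_cell_eq_closure_union[OF assms(1)] by (auto simp: closure_union_def)
  moreover have "connected (closure (\<Omega> i))"
    using assms(2) connected_cell connected_imp_connected_closure by blast
  ultimately show ?thesis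
    using assms(3-5) unfolding connected_closed by blast
qed

lemma closure_union_cells_in_piece:
  assumes "l \<in> Q" "closed P" "closed R" "P \<inter> R = {}" "P \<union> R = - \<Omega> l"
  shows "closure_union \<Omega> {i \<in> Q - {l}. closure (\<Omega> i) \<subseteq> P} = P"
proof
  show "closure_union \<Omega> {i \<in> Q - {l}. closure (\<Omega> i) \<subseteq> P} \<subseteq> P"
    by (auto simp: closure_union_def)
  show "P \<subseteq> closure_union \<Omega> {i \<in> Q - {l}. closure (\<Omega> i) \<subseteq> P}"
  proof
    fix x assume "x \<in> P"
    then obtain i where i: "i \<in> Q - {l}" "x \<in> closure (\<Omega> i)"
      using assms(5) Compl_cell_eq_closure_union[OF assms(1)] by (auto simp: closure_union_def)
    then have "closure (\<Omega> i) \<subseteq> P"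
      using closure_cell_subset_piece[OF assms(1) i(1) assms(2-5)] \<open>x \<in> P\<close> assms(4) by blast
    then show "x \<in> closure_union \<Omega> {i \<in> Q - {l}. closure (\<Omega> i) \<subseteq> P}"
      using i by (auto simp: closure_union_def)
  qed
qed

lemma closure_unions_disjoint_if_frontiers_separated:
  assumes "K \<subseteq> Q" "A \<inter> B = {}"
    and "\<And>i. i \<in> K \<Longrightarrow> frontier (\<Omega> i) \<subseteq> A" "\<And>j. j \<in> Q - K \<Longrightarrow> frontier (\<Omega> j) \<subseteq> B"
  shows "closure_union \<Omega> K \<inter> closure_union \<Omega> (Q - K) = {}"
proof -
  have "closure (\<Omega> i) \<inter> closure (\<Omega> j) = {}" if "i \<in> K" "j \<in> Q - K" for i j
    using that assms closure_Int_closure_subset_frontier[of i j] closure_Int_closure_subset_frontier[of j i]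
    by blast
  then show ?thesis
    by (auto simp: closure_union_def)
qed

lemma cell_frontier_meets_both_pieces:
  assumes "connected (UNIV :: 'a set)"
    and "closed A" "closed B" "A \<noteq> {}" "B \<noteq> {}" "A \<inter> B = {}"
    and AB: "A \<union> B = (\<Union>i\<in>Q. frontier (\<Omega> i))"
  shows "\<exists>l\<in>Q. frontier (\<Omega> l) \<inter> A \<noteq> {} \<and> frontier (\<Omega> l) \<inter> B \<noteq> {}"
proof (rule ccontr)
  assume none: "\<not> ?thesis"
  define K where "K = {i \<in> Q. frontier (\<Omega> i) \<subseteq> A}"
  have "K \<subseteq> Q"
    by (auto simp: K_def)
  have one_side: "frontier (\<Omega> i) \<subseteq> A \<or> frontier (\<Omega> i) \<subseteq> B" if "i \<in> Q" for i
    using that none AB by blast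
  obtain a b i j where "a \<in> frontier (\<Omega> i) \<inter> A" "b \<in> frontier (\<Omega> j) \<inter> B" "i \<in> Q" "j \<in> Q"
    using \<open>A \<noteq> {}\<close> \<open>B \<noteq> {}\<close> AB by blast
  then have "K \<noteq> {}" "Q - K \<noteq> {}"
    using one_side[of i] \<open>A \<inter> B = {}\<close> unfolding K_def by blast+
  then have "closure_union \<Omega> K \<noteq> {}" "closure_union \<Omega> (Q - K) \<noteq> {}"
    using closure_union_nonempty[of K] closure_union_nonempty[of "Q - K"] \<open>K \<subseteq> Q\<close> by blast+
  moreover have "closure_union \<Omega> K \<inter> closure_union \<Omega> (Q - K) = {}"
    using \<open>A \<inter> B = {}\<close> \<open>K \<subseteq> Q\<close> one_side
    by (intro closure_unions_disjoint_if_frontiers_separated) (auto simp: K_def)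
  moreover have "closure_union \<Omega> K \<union> closure_union \<Omega> (Q - K) = UNIV"
    using closures_cover by (auto simp: closure_union_def)
  moreover have "closed (closure_union \<Omega> K)" "closed (closure_union \<Omega> (Q - K))"
    using \<open>K \<subseteq> Q\<close> by (auto intro!: closed_closure_union)
  ultimately show False
    using assms(1) connected_closed_set[OF closed_UNIV] by metis
qed

lemma separating_cell_splits_partition:
  assumes "connected (UNIV :: 'a set)" "l \<in> Q"
    and PR: "closed P" "closed R" "P \<noteq> {}" "R \<noteq> {}" "P \<inter> R = {}" "P \<union> R = - \<Omega> l"
  shows "\<exists>I J. I \<union> {l} \<union> J = Q \<and> I \<inter> J = {} \<and> l \<notin> I \<and> l \<notin> J
           \<and> I \<noteq> {} \<and> J \<noteq> {}
           \<and> closure_union \<Omega> I \<union> \<Omega> l \<union> closure_union \<Omega> J = UNIV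
           \<and> closure_union \<Omega> I \<inter> \<Omega> l = {}
           \<and> closure_union \<Omega> J \<inter> \<Omega> l = {}
           \<and> closure_union \<Omega> I \<inter> closure_union \<Omega> J = {}
           \<and> frontier (\<Omega> l) = frontier (closure_union \<Omega> I) \<union> frontier (closure_union \<Omega> J)
           \<and> frontier (closure_union \<Omega> I) \<inter> frontier (closure_union \<Omega> J) = {}
           \<and> frontier (closure_union \<Omega> I) \<noteq> {}
           \<and> frontier (closure_union \<Omega> J) \<noteq> {}"
proof -
  define I where "I = {i \<in> Q - {l}. closure (\<Omega> i) \<subseteq> P}"
  define J where "J = {i \<in> Q - {l}. closure (\<Omega> i) \<subseteq> R}"
  have cuI: "closure_union \<Omega> I = P"
    unfolding I_def using assms(2) PR(1,2,5,6) by (rule closure_union_cells_in_piece)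
  have cuJ: "closure_union \<Omega> J = R"
    unfolding J_def using assms(2) PR by (intro closure_union_cells_in_piece) auto
  have frP: "frontier P = P \<inter> frontier (\<Omega> l)"
    using frontier_of_closed_piece_of_Compl[OF PR(1,2,5,6) open_cell[OF assms(2)]] .
  have frR: "frontier R = R \<inter> frontier (\<Omega> l)"
    using frontier_of_closed_piece_of_Compl[OF PR(2,1) _ _ open_cell[OF assms(2)]] PR(5,6)
    by (simp add: Int_commute Un_commute)
  have "frontier (\<Omega> l) \<subseteq> P \<union> R"
    using PR(6) frontier_cell[OF assms(2)] by blast
  have "P \<noteq> UNIV" "R \<noteq> UNIV"
    using PR(6) cell_nonempty[OF assms(2)] by auto
  have "I \<union> {l} \<union> J = Q"
    using closure_cell_subset_piece[OF assms(2) _ PR(1,2,5,6)] assms(2) by (auto simp: I_def J_def)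
  moreover have "I \<inter> J = {}"
    using cell_nonempty closure_subset PR(5) by (fastforce simp: I_def J_def)
  moreover have "l \<notin> I" "l \<notin> J" "I \<noteq> {}" "J \<noteq> {}"
    using cuI cuJ PR(3,4) by (auto simp: I_def J_def closure_union_def)
  moreover have "P \<union> \<Omega> l \<union> R = UNIV" "P \<inter> \<Omega> l = {}" "R \<inter> \<Omega> l = {}"
    using PR(6) by blast+
  moreover have "frontier (\<Omega> l) = frontier P \<union> frontier R"
    using frP frR \<open>frontier (\<Omega> l) \<subseteq> P \<union> R\<close> by blast
  moreover have "frontier P \<inter> frontier R = {}"
    using frP frR PR(5) by blast
  moreover have "frontier P \<noteq> {}" "frontier R \<noteq> {}"
    using PR(3,4) assms(1) \<open>P \<noteq> UNIV\<close> \<open>R \<noteq> UNIV\<close>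
    by (simp_all add: frontier_nonempty_in_connected_space)
  ultimately show ?thesis
    using PR(5) unfolding cuI[symmetric] cuJ[symmetric] by (intro exI[of _ I] exI[of _ J] conjI) simp_all
qed

end

theorem theorem1p5:
  fixes \<Omega> :: "nat \<Rightarrow> 'a::metric_space set" and q :: nat
  assumes "connected (UNIV :: 'a set)"
    and "simply_connected (UNIV :: 'a set)"
    and "locally path_connected (UNIV :: 'a set)"
    and "\<And>i. i \<in> {1..q} \<Longrightarrow> open (\<Omega> i)"
    and "\<And>i. i \<in> {1..q} \<Longrightarrow> \<Omega> i \<noteq> {}"
    and "\<And>i j. i \<in> {1..q} \<Longrightarrow> j \<in> {1..q} \<Longrightarrow> i \<noteq> j \<Longrightarrow> \<Omega> i \<inter> \<Omega> j = {}"
    and "(\<Union>i\<in>{1..q}. closure (\<Omega> i)) = UNIV"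
    and "\<And>i. i \<in> {1..q} \<Longrightarrow> connected (\<Omega> i)"
    and "\<And>i. i \<in> {1..q} \<Longrightarrow> \<Omega> i = interior (closure (\<Omega> i))"
    and "\<not> connected (\<Union>i\<in>{1..q}. frontier (\<Omega> i))"
  shows "\<exists>I l J. I \<union> {l} \<union> J = {1..q} \<and> I \<inter> J = {} \<and> l \<notin> I \<and> l \<notin> J
           \<and> I \<noteq> {} \<and> J \<noteq> {}
           \<and> closure_union \<Omega> I \<union> \<Omega> l \<union> closure_union \<Omega> J = UNIV
           \<and> closure_union \<Omega> I \<inter> \<Omega> l = {}
           \<and> closure_union \<Omega> J \<inter> \<Omega> l = {}
           \<and> closure_union \<Omega> I \<inter> closure_union \<Omega> J = {}
           \<and> frontier (\<Omega> l) = frontier (closure_union \<Omega> I) \<union> frontier (closure_union \<Omega> J)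
           \<and> frontier (closure_union \<Omega> I) \<inter> frontier (closure_union \<Omega> J) = {}
           \<and> frontier (closure_union \<Omega> I) \<noteq> {}
           \<and> frontier (closure_union \<Omega> J) \<noteq> {}"
proof -
  interpret regular_open_partition "{1..q}" \<Omega>
    by unfold_locales (use assms in auto)
  have "closed (\<Union>i\<in>{1..q}. frontier (\<Omega> i))"
    by (auto intro: closed_UN)
  then obtain A B where "closed A" "closed B" "A \<noteq> {}" "B \<noteq> {}" "A \<inter> B = {}"
      "A \<union> B = (\<Union>i\<in>{1..q}. frontier (\<Omega> i))"
    using assms(10) connected_closed_set by metis
  then obtain l where l: "l \<in> {1..q}" "frontier (\<Omega> l) \<inter> A \<noteq> {}" "frontier (\<Omega> l) \<inter> B \<noteq> {}"
    using cell_frontier_meets_both_pieces[OF assms(1)] by blast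
  have "frontier (\<Omega> l) \<subseteq> A \<union> B"
    using l(1) \<open>A \<union> B = _\<close> by blast
  then have "\<not> connected (frontier (\<Omega> l))"
    using l(2,3) \<open>closed A\<close> \<open>closed B\<close> \<open>A \<inter> B = {}\<close> unfolding connected_closed by blast
  moreover have "unicoherent (UNIV :: 'a set)"
    using assms(2,3) by (rule simply_connected_imp_unicoherent)
  ultimately have "\<not> connected (- \<Omega> l)"
    using connected_frontier_if_unicoherent open_cell[OF l(1)] connected_cell[OF l(1)] by blast
  then obtain P R where PR: "closed P" "closed R" "P \<noteq> {}" "R \<noteq> {}" "P \<inter> R = {}" "P \<union> R = - \<Omega> l"
    using connected_closed_set[of "- \<Omega> l"] open_cell[OF l(1)] by auto
  then show ?thesis
    using separating_cell_splits_partition[OF assms(1) l(1) PR] by (elim exE) (intro exI, assumption)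
qed

end
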